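(* Let $N$ be a power of $4$ and let $S_N$ be the STOne matrix: $S_4=\frac12\begin{pmatrix}-1&1&1&1\\ 1&-1&1&1\\ 1&1&-1&1\\ 1&1&1&-1\end{pmatrix}$ and $S_{4^{k+1}}=S_4\otimes S_{4^k}$ for $k\ge1$ (Kronecker product). Let $v\in\mathbb{R}^N$, let $\mu=\mathrm{Mean}(v)\,1_N$, and define $e=S_Nv-\mu$, so that the $i$-th entry of $S_Nv$ equals $\mu_i+e(i)$. Then $\mathrm{Mean}(e)=0$ and $\mathrm{Var}(e)=\mathrm{Var}(v)$.
   Context: For $x\in\mathbb{R}^N$, $\mathrm{Mean}(x)=\frac1N\sum_{i=1}^N x_i$ and $\mathrm{Var}(x)=\frac1N\sum_{i=1}^N (x_i-\mathrm{Mean}(x))^2$. $1_N$ is the all-ones vector in $\mathbb{R}^N$. *)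

theory Defs
  imports Complex_Main
begin

text \<open>Vectors in R^N are functions nat => real (only indices i < N matter);
  N x N matrices are functions nat => nat => real (only indices < N matter).\<close>

definition vmean :: "nat \<Rightarrow> (nat \<Rightarrow> real) \<Rightarrow> real" where
  "vmean N x = (\<Sum>i<N. x i) / real N"

definition vvar :: "nat \<Rightarrow> (nat \<Rightarrow> real) \<Rightarrow> real" where
  "vvar N x = (\<Sum>i<N. (x i - vmean N x)^2) / real N"

definition mat_vec :: "nat \<Rightarrow> (nat \<Rightarrow> nat \<Rightarrow> real) \<Rightarrow> (nat \<Rightarrow> real) \<Rightarrow> nat \<Rightarrow> real" where
  "mat_vec N A v = (\<lambda>i. \<Sum>j<N. A i j * v j)"

definition kron :: "(nat \<Rightarrow> nat \<Rightarrow> real) \<Rightarrow> nat \<Rightarrow> (nat \<Rightarrow> nat \<Rightarrow> real) \<Rightarrow> nat \<Rightarrow> nat \<Rightarrow> real" where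
  "kron A m B = (\<lambda>i j. A (i div m) (j div m) * B (i mod m) (j mod m))"

definition S4 :: "nat \<Rightarrow> nat \<Rightarrow> real" where
  "S4 = (\<lambda>i j. if i = j then - 1/2 else 1/2)"

text \<open>stone k is the STOne matrix S_{4^k} (for k \<ge> 1).\<close>
fun stone :: "nat \<Rightarrow> nat \<Rightarrow> nat \<Rightarrow> real" where
  "stone 0 = (\<lambda>i j. 0)"
| "stone (Suc 0) = S4"
| "stone (Suc (Suc k)) = kron S4 (4 ^ Suc k) (stone (Suc k))"

end

theory Submission
  imports Defs
begin

text \<open>Every column of S4 sums to 1 and the columns are orthonormal; both properties pass to
  Kronecker products, hence to every STOne matrix. A matrix with unit column sums preserves the sum
  of a vector, and one with orthonormal columns preserves its sum of squares. So S v has the mean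
  and the variance of v, and subtracting the constant Mean(v) centres it without changing the
  variance.\<close>

definition col_sums_one :: "nat \<Rightarrow> (nat \<Rightarrow> nat \<Rightarrow> real) \<Rightarrow> bool" where
  "col_sums_one n A \<longleftrightarrow> (\<forall>j<n. (\<Sum>i<n. A i j) = 1)"

definition orthonormal_cols :: "nat \<Rightarrow> (nat \<Rightarrow> nat \<Rightarrow> real) \<Rightarrow> bool" where
  "orthonormal_cols n A \<longleftrightarrow> (\<forall>j<n. \<forall>l<n. (\<Sum>i<n. A i j * A i l) = of_bool (j = l))"

lemma sum_lessThan_mult_nat:
  fixes f :: "nat \<Rightarrow> 'a::comm_monoid_add"
  shows "(\<Sum>i<n*m. f i) = (\<Sum>a<n. \<Sum>b<m. f (a*m + b))"
proof -
  have "(\<Sum>b<m. f (a*m + b)) = (\<Sum>i\<in>{a*m..<a*m + m}. f i)" for a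
    using sum.shift_bounds_nat_ivl[of f 0 "a*m" m] by (simp add: atLeast0LessThan add.commute)
  then show ?thesis
    by (simp add: sum.nat_group)
qed

lemma sum_kron_mult:
  assumes "m > 0"
  shows "(\<Sum>i<n*m. kron A m B i j * kron C m D i l)
       = (\<Sum>a<n. A a (j div m) * C a (l div m)) * (\<Sum>b<m. B b (j mod m) * D b (l mod m))"
proof -
  have "(\<Sum>i<n*m. kron A m B i j * kron C m D i l)
      = (\<Sum>a<n. \<Sum>b<m. (A a (j div m) * C a (l div m)) * (B b (j mod m) * D b (l mod m)))"
    unfolding sum_lessThan_mult_nat kron_def using assms by (intro sum.cong refl) (simp add: mult_ac)
  then show ?thesis
    by (simp add: sum_product)
qed

lemma div_mod_less_mult:
  fixes j n m :: nat
  assumes "j < n*m"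
  shows "j div m < n" "j mod m < m"
proof -
  show "j div m < n" using assms less_mult_imp_div_less[of j n m] by (simp add: mult.commute)
  show "j mod m < m" using assms by (cases m) simp_all
qed

lemma col_sums_one_kron:
  assumes "col_sums_one n A" and "col_sums_one m B"
  shows "col_sums_one (n*m) (kron A m B)"
  unfolding col_sums_one_def
proof (intro allI impI)
  fix j assume j: "j < n*m"
  then have "m > 0" by (cases m) auto
  \<comment> \<open>A column sum is the inner product with the all-ones matrix, itself a Kronecker product.\<close>
  have ones: "kron (\<lambda>_ _. 1) m (\<lambda>_ _. 1) = (\<lambda>_ _. 1)"
    by (simp add: kron_def)
  have "(\<Sum>i<n*m. kron A m B i j) = (\<Sum>i<n*m. kron A m B i j * kron (\<lambda>_ _. 1) m (\<lambda>_ _. 1) i j)"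
    by (simp add: ones)
  also have "\<dots> = (\<Sum>a<n. A a (j div m)) * (\<Sum>b<m. B b (j mod m))"
    using sum_kron_mult[OF \<open>m > 0\<close>] by simp
  also have "\<dots> = 1"
    using assms div_mod_less_mult[OF j] by (simp add: col_sums_one_def)
  finally show "(\<Sum>i<n*m. kron A m B i j) = 1" .
qed

lemma orthonormal_cols_kron:
  assumes A: "orthonormal_cols n A" and B: "orthonormal_cols m B"
  shows "orthonormal_cols (n*m) (kron A m B)"
  unfolding orthonormal_cols_def
proof (intro allI impI)
  fix j l assume j: "j < n*m" and l: "l < n*m"
  then have "m > 0" by (cases m) auto
  have "(\<Sum>i<n*m. kron A m B i j * kron A m B i l)
      = (\<Sum>a<n. A a (j div m) * A a (l div m)) * (\<Sum>b<m. B b (j mod m) * B b (l mod m))"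
    by (rule sum_kron_mult[OF \<open>m > 0\<close>])
  also have "\<dots> = of_bool (j div m = l div m) * of_bool (j mod m = l mod m)"
    using A B div_mod_less_mult[OF j] div_mod_less_mult[OF l] unfolding orthonormal_cols_def
    by presburger
  also have "\<dots> = of_bool (j = l)"
  proof -
    have "j = l \<longleftrightarrow> j div m = l div m \<and> j mod m = l mod m"
      by (metis div_mult_mod_eq)
    then show ?thesis by simp
  qed
  finally show "(\<Sum>i<n*m. kron A m B i j * kron A m B i l) = of_bool (j = l)" .
qed

lemma sum_lessThan_4: "(\<Sum>a<4::nat. g a) = g 0 + g 1 + g 2 + (g 3 :: real)"
  by (simp add: eval_nat_numeral)

lemma col_sums_one_S4: "col_sums_one 4 S4"
  unfolding col_sums_one_def sum_lessThan_4 S4_def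
  by (auto simp: less_Suc_eq eval_nat_numeral)

lemma orthonormal_cols_S4: "orthonormal_cols 4 S4"
  unfolding orthonormal_cols_def sum_lessThan_4 S4_def
  by (auto simp: less_Suc_eq eval_nat_numeral)

lemma stone_Suc: "k \<ge> 1 \<Longrightarrow> stone (Suc k) = kron S4 (4^k) (stone k)"
  by (cases k) auto

lemma stone_col_sums_one: "k \<ge> 1 \<Longrightarrow> col_sums_one (4^k) (stone k)"
proof (induction k rule: nat_induct_at_least)
  case base
  show ?case using col_sums_one_S4 by simp
next
  case (Suc k)
  then show ?case
    using col_sums_one_kron[OF col_sums_one_S4] by (simp add: stone_Suc)
qed

lemma stone_orthonormal_cols: "k \<ge> 1 \<Longrightarrow> orthonormal_cols (4^k) (stone k)"
proof (induction k rule: nat_induct_at_least)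
  case base
  show ?case using orthonormal_cols_S4 by simp
next
  case (Suc k)
  then show ?case
    using orthonormal_cols_kron[OF orthonormal_cols_S4] by (simp add: stone_Suc)
qed

lemma sum_mat_vec:
  assumes "col_sums_one N A"
  shows "(\<Sum>i<N. mat_vec N A v i) = (\<Sum>j<N. v j)"
proof -
  have "(\<Sum>i<N. mat_vec N A v i) = (\<Sum>j<N. (\<Sum>i<N. A i j) * v j)"
    unfolding mat_vec_def by (subst sum.swap) (simp add: sum_distrib_right)
  also have "\<dots> = (\<Sum>j<N. v j)"
    using assms by (simp add: col_sums_one_def)
  finally show ?thesis .
qed

lemma sum_squares_mat_vec:
  assumes "orthonormal_cols N A"
  shows "(\<Sum>i<N. (mat_vec N A v i)^2) = (\<Sum>j<N. (v j)^2)"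
proof -
  have "(\<Sum>i<N. (mat_vec N A v i)^2) = (\<Sum>i<N. \<Sum>j<N. \<Sum>l<N. A i j * A i l * v j * v l)"
    unfolding mat_vec_def power2_eq_square sum_product by (simp add: mult_ac)
  also have "\<dots> = (\<Sum>j<N. \<Sum>l<N. (\<Sum>i<N. A i j * A i l) * v j * v l)"
    by (subst sum.swap, subst sum.swap) (simp add: sum_distrib_right)
  also have "\<dots> = (\<Sum>j<N. \<Sum>l<N. if j = l then v j * v l else 0)"
    using assms by (intro sum.cong refl) (simp add: orthonormal_cols_def)
  also have "\<dots> = (\<Sum>j<N. (v j)^2)"
    by (simp add: power2_eq_square)
  finally show ?thesis .
qed

lemma vmean_diff_const: "N > 0 \<Longrightarrow> vmean N (\<lambda>i. x i - c) = vmean N x - c"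
  by (simp add: vmean_def sum_subtractf field_simps)

lemma vvar_diff_const: "vvar N (\<lambda>i. x i - c) = vvar N x"
  by (cases "N = 0") (simp_all add: vvar_def vmean_diff_const)

lemma vvar_eq_mean_squares:
  assumes "N > 0"
  shows "vvar N x = (\<Sum>i<N. (x i)^2) / real N - (vmean N x)^2"
  using assms
  by (simp add: vvar_def vmean_def power2_diff sum_subtractf sum.distrib sum_distrib_left
      sum_divide_distrib[symmetric] field_simps power2_eq_square)

theorem lemma1:
  fixes k N :: nat and v :: "nat \<Rightarrow> real"
  assumes "k \<ge> 1" and "N = 4 ^ k"
  defines "e \<equiv> (\<lambda>i. mat_vec N (stone k) v i - vmean N v)"
  shows "vmean N e = 0 \<and> vvar N e = vvar N v"
proof -
  have "N > 0" using assms(2) by simp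
  have cols: "col_sums_one N (stone k)" "orthonormal_cols N (stone k)"
    using stone_col_sums_one stone_orthonormal_cols assms(1,2) by simp_all
  have mean: "vmean N (mat_vec N (stone k) v) = vmean N v"
    using sum_mat_vec[OF cols(1)] by (simp add: vmean_def)
  have "vmean N e = 0"
    using vmean_diff_const[OF \<open>N > 0\<close>] mean by (simp add: e_def)
  moreover have "vvar N e = vvar N v"
    using vvar_diff_const vvar_eq_mean_squares[OF \<open>N > 0\<close>] sum_squares_mat_vec[OF cols(2)] mean
    by (simp add: e_def)
  ultimately show ?thesis ..
qed

end
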